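(* Let $f(t)=-27(t^2-t+1)$ and $g(t)=-27(2t^3-3t^2-3t+2)$. If $E/\mathbb{Q}$ is an elliptic curve such that $\mathbb{Z}/2\mathbb{Z}\times\mathbb{Z}/2\mathbb{Z}$ embeds into $E_{\mathrm{tors}}(\mathbb{Q})$ and $j(E)\ne0,1728$, then $E$ is $\mathbb{Q}$-isomorphic to an element of $\mathcal{G}$. Moreover, for every $E\in\mathcal{G}$ with $j(E)\ne0,1728$, the fibre of the map $\mathcal{G}\to\mathcal{G}/{\cong_{\mathbb{Q}}}$ containing $E$ has size $6$.
   Context: $\mathcal{E}_t:y^2=x^3+f(t)x+g(t)$ for $t\in\mathbb{Q}$, and $\mathcal{E}_t^d$ is its quadratic twist by $d$. $\mathcal{G}=\{\mathcal{E}_t^d:t\in\mathbb{Q},\ d\in\mathbb{Z}\text{ squarefree},\ \mathrm{Disc}(\mathcal{E}_t^d)\ne0\}$ is regarded as a multiset indexed by the pairs $(t,d)$ (distinct pairs give distinct elements), and $\mathcal{G}\to\mathcal{G}/{\cong_{\mathbb{Q}}}$ sends an element to its $\mathbb{Q}$-isomorphism class. *)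

theory Defs
  imports Complex_Main "HOL-Computational_Algebra.Squarefree"
begin

text \<open>Elliptic curves over Q in short Weierstrass form y^2 = x^3 + A x + B,
  encoded by the coefficient pair (A, B).\<close>

definition ec_disc :: "rat \<Rightarrow> rat \<Rightarrow> rat" where
  "ec_disc A B = -16 * (4 * A^3 + 27 * B^2)"

definition j_inv :: "rat \<Rightarrow> rat \<Rightarrow> rat" where
  "j_inv A B = 1728 * (4 * A^3) / (4 * A^3 + 27 * B^2)"

text \<open>Q-isomorphism of short Weierstrass models: (x,y) = (u^2 x', u^3 y').\<close>
definition iso_Q :: "rat \<times> rat \<Rightarrow> rat \<times> rat \<Rightarrow> bool" where
  "iso_Q E E' \<longleftrightarrow> (\<exists>u::rat. u \<noteq> 0 \<and> fst E' = u^4 * fst E \<and> snd E' = u^6 * snd E)"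

datatype ec_point = Inf | Pt rat rat

definition on_curve :: "rat \<times> rat \<Rightarrow> ec_point \<Rightarrow> bool" where
  "on_curve E P = (case P of Inf \<Rightarrow> True
      | Pt x y \<Rightarrow> y^2 = x^3 + fst E * x + snd E)"

definition ec_add :: "rat \<times> rat \<Rightarrow> ec_point \<Rightarrow> ec_point \<Rightarrow> ec_point" where
  "ec_add E P Q = (case P of Inf \<Rightarrow> Q | Pt x1 y1 \<Rightarrow>
     (case Q of Inf \<Rightarrow> P | Pt x2 y2 \<Rightarrow>
       (if x1 = x2 \<and> y1 = - y2 then Inf
        else let l = (if x1 = x2 then (3 * x1^2 + fst E) / (2 * y1)
                      else (y2 - y1) / (x2 - x1));
                 x3 = l^2 - x1 - x2
             in Pt x3 (l * (x1 - x3) - y1))))"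

fun ec_smul :: "rat \<times> rat \<Rightarrow> nat \<Rightarrow> ec_point \<Rightarrow> ec_point" where
  "ec_smul E 0 P = Inf"
| "ec_smul E (Suc n) P = ec_add E P (ec_smul E n P)"

definition tors_pt :: "rat \<times> rat \<Rightarrow> ec_point \<Rightarrow> bool" where
  "tors_pt E P \<longleftrightarrow> on_curve E P \<and> (\<exists>n>0. ec_smul E n P = Inf)"

text \<open>Z/2Z x Z/2Z realised as bool x bool with componentwise xor.\<close>
definition klein_add :: "bool \<times> bool \<Rightarrow> bool \<times> bool \<Rightarrow> bool \<times> bool" where
  "klein_add a b = (fst a \<noteq> fst b, snd a \<noteq> snd b)"

definition klein_embeds_tors :: "rat \<times> rat \<Rightarrow> bool" where
  "klein_embeds_tors E \<longleftrightarrow> (\<exists>\<phi> :: bool \<times> bool \<Rightarrow> ec_point.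
      inj \<phi> \<and> (\<forall>a. tors_pt E (\<phi> a)) \<and>
      (\<forall>a b. \<phi> (klein_add a b) = ec_add E (\<phi> a) (\<phi> b)))"

definition ff :: "rat \<Rightarrow> rat" where
  "ff t = -27 * (t^2 - t + 1)"

definition gg :: "rat \<Rightarrow> rat" where
  "gg t = -27 * (2 * t^3 - 3 * t^2 - 3 * t + 2)"

definition Etd :: "rat \<Rightarrow> int \<Rightarrow> rat \<times> rat" where
  "Etd t d = (of_int d ^ 2 * ff t, of_int d ^ 3 * gg t)"

text \<open>The index set of the multiset G.\<close>
definition G_idx :: "(rat \<times> int) set" where
  "G_idx = {(t, d). squarefree d \<and> ec_disc (fst (Etd t d)) (snd (Etd t d)) \<noteq> 0}"

end

theory Submission
  imports Defs
begin

(* A Klein four-group in E(Q) consists of O and three points (x_i, 0) of order 2, so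
   x^3 + A x + B has three distinct rational roots x1, x2, x3.  The 2-torsion abscissae of
   y^2 = x^3 + c^2 f(t) x + c^3 g(t) are 3c(2t - 1), -3c(t + 1), 3c(2 - t); taking
   t = (x1 - x2)/(x3 - x2) and c = (x3 - x2)/9 recovers (A, B), and twisting by c is
   Q-isomorphic to twisting by the squarefree part d of c.
   Conversely an isomorphism between E_s^e and E_t^d amounts to (f(t), g(t)) being the twist
   of (f(s), g(s)) by some w, and it maps 2-torsion to 2-torsion.  This forces s into the orbit
   {t, 1 - t, t/(t - 1), 1/(1 - t), (t - 1)/t, 1/t} of t under permutations of the 2-torsion
   points, determines w by s, and e as the squarefree part of w d.  The six values of s are
   distinct exactly when g(t) <> 0, i.e. j <> 1728. *)

lemma squarefree_mult_square_eq_imp_normalize_eq: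
  fixes e1 e2 m n :: "'a :: factorial_semiring"
  assumes sqf1: "squarefree e1" and sqf2: "squarefree e2" and "m \<noteq> 0" "n \<noteq> 0"
    and eq: "e1 * m ^ 2 = e2 * n ^ 2"
  shows "normalize e1 = normalize e2"
proof (rule multiplicity_eq_imp_eq)
  show "e1 \<noteq> 0" "e2 \<noteq> 0" using sqf1 sqf2 by auto
  fix p :: 'a assume p: "prime p"
  have "multiplicity p (e1 * m ^ 2) = multiplicity p (e2 * n ^ 2)" using eq by simp
  then have "multiplicity p e1 + 2 * multiplicity p m = multiplicity p e2 + 2 * multiplicity p n"
    using p \<open>e1 \<noteq> 0\<close> \<open>e2 \<noteq> 0\<close> \<open>m \<noteq> 0\<close> \<open>n \<noteq> 0\<close>
    by (simp add: prime_elem_multiplicity_mult_distrib prime_elem_multiplicity_power_distrib)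
  moreover have "multiplicity p e1 \<le> 1" "multiplicity p e2 \<le> 1"
    using sqf1 sqf2 p \<open>e1 \<noteq> 0\<close> \<open>e2 \<noteq> 0\<close> by (simp_all add: squarefree_factorial_semiring'')
  ultimately show "multiplicity p e1 = multiplicity p e2" by presburger
qed

lemma squarefree_int_mult_square_eq_imp_eq:
  fixes e1 e2 m n :: int
  assumes "squarefree e1" "squarefree e2" "m \<noteq> 0" "n \<noteq> 0" and eq: "e1 * m ^ 2 = e2 * n ^ 2"
  shows "e1 = e2"
proof -
  have "\<bar>e1\<bar> = \<bar>e2\<bar>"
    using squarefree_mult_square_eq_imp_normalize_eq[OF assms] by simp
  moreover have "sgn e1 = sgn e2"
    using arg_cong[OF eq, of sgn] \<open>m \<noteq> 0\<close> \<open>n \<noteq> 0\<close> by (simp add: sgn_mult power2_eq_square)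
  ultimately show ?thesis by (metis sgn_mult_abs)
qed

(* For r = a/b the integer a b = r b^2 differs from r by a square; the junk value at 0 is 1. *)
definition rat_squarefree_part :: "rat \<Rightarrow> int" where
  "rat_squarefree_part r = (case quotient_of r of (a, b) \<Rightarrow> squarefree_part (a * b))"

lemma squarefree_rat_squarefree_part [simp]: "squarefree (rat_squarefree_part r)"
  by (simp add: rat_squarefree_part_def split: prod.split)

lemma rat_squarefree_part_decompose:
  assumes "r \<noteq> 0"
  obtains v where "v \<noteq> 0" "r = v ^ 2 * of_int (rat_squarefree_part r)"
proof -
  obtain a b where q: "quotient_of r = (a, b)" by fastforce
  have b: "b > 0" and r: "r = of_int a / of_int b"
    using quotient_of_denom_pos[OF q] quotient_of_div[OF q] by simp_all
  have "a \<noteq> 0" using assms r by auto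
  define n where "n = a * b"
  have "square_part n \<noteq> 0" using \<open>a \<noteq> 0\<close> b by (simp add: n_def)
  show ?thesis
  proof (rule that[of "of_int (square_part n) / of_int b"])
    have "r = of_int n / of_int b ^ 2" using b r by (simp add: n_def power2_eq_square)
    also have "\<dots> = (of_int (square_part n) / of_int b) ^ 2 * of_int (squarefree_part n)"
      by (subst squarefree_decompose[of n]) (simp add: power_divide field_simps)
    also have "squarefree_part n = rat_squarefree_part r"
      by (simp add: rat_squarefree_part_def q n_def)
    finally show "r = (of_int (square_part n) / of_int b) ^ 2 * of_int (rat_squarefree_part r)" .
  qed (use b \<open>square_part n \<noteq> 0\<close> in simp)
qed

lemma rat_squarefree_part_eqI:
  assumes sqf: "squarefree e" and "v \<noteq> 0" and r: "r = v ^ 2 * of_int e"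
  shows "rat_squarefree_part r = e"
proof -
  have "r \<noteq> 0" using assms by auto
  then obtain w where "w \<noteq> 0" and w: "r = w ^ 2 * of_int (rat_squarefree_part r)"
    by (rule rat_squarefree_part_decompose)
  define k where "k = v / w"
  have "k \<noteq> 0" using \<open>v \<noteq> 0\<close> \<open>w \<noteq> 0\<close> by (simp add: k_def)
  obtain a b where q: "quotient_of k = (a, b)" by fastforce
  have "b \<noteq> 0" and k: "k = of_int a / of_int b"
    using quotient_of_denom_pos[OF q] quotient_of_div[OF q] by simp_all
  have "a \<noteq> 0" using \<open>k \<noteq> 0\<close> k by auto
  have "of_int (rat_squarefree_part r) = k ^ 2 * (of_int e :: rat)"
    using w r \<open>w \<noteq> 0\<close> by (simp add: k_def power_divide field_simps)
  then have "of_int (rat_squarefree_part r * b ^ 2) = (of_int (e * a ^ 2) :: rat)"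
    using \<open>b \<noteq> 0\<close> by (simp add: k power_divide field_simps)
  then have "rat_squarefree_part r * b ^ 2 = e * a ^ 2" by (simp only: of_int_eq_iff)
  then show ?thesis
    using squarefree_int_mult_square_eq_imp_eq \<open>a \<noteq> 0\<close> \<open>b \<noteq> 0\<close> sqf by simp
qed

definition quad_twist :: "rat \<Rightarrow> rat \<times> rat \<Rightarrow> rat \<times> rat" where
  "quad_twist c E = (c ^ 2 * fst E, c ^ 3 * snd E)"

lemma quad_twist_1 [simp]: "quad_twist 1 E = E"
  by (simp add: quad_twist_def)

lemma quad_twist_mult: "quad_twist (a * b) E = quad_twist a (quad_twist b E)"
  by (simp add: quad_twist_def power_mult_distrib)

lemma quad_twist_cancel:
  assumes "a \<noteq> 0" and "quad_twist a E = quad_twist b E'"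
  shows "E = quad_twist (b / a) E'"
  using assms by (auto simp: quad_twist_def prod_eq_iff power_divide field_simps)

lemma quad_twist_root:
  assumes "x ^ 3 + fst E * x + snd E = 0"
  shows "(c * x) ^ 3 + fst (quad_twist c E) * (c * x) + snd (quad_twist c E) = 0"
proof -
  have "(c * x) ^ 3 + fst (quad_twist c E) * (c * x) + snd (quad_twist c E)
      = c ^ 3 * (x ^ 3 + fst E * x + snd E)"
    by (simp add: quad_twist_def algebra_simps power3_eq_cube power2_eq_square)
  with assms show ?thesis by simp
qed

lemma iso_Q_iff_quad_twist_square: "iso_Q E E' \<longleftrightarrow> (\<exists>u. u \<noteq> 0 \<and> E' = quad_twist (u ^ 2) E)"
  by (simp add: iso_Q_def quad_twist_def prod_eq_iff flip: power_mult)

lemma iso_Q_sym: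
  assumes "iso_Q E E'"
  shows "iso_Q E' E"
proof -
  obtain u where "u \<noteq> 0" and "E' = quad_twist (u ^ 2) E"
    using assms by (auto simp: iso_Q_iff_quad_twist_square)
  then have "E = quad_twist ((1 / u) ^ 2) E'"
    by (simp add: power_one_over flip: quad_twist_mult)
  with \<open>u \<noteq> 0\<close> show ?thesis
    unfolding iso_Q_iff_quad_twist_square by (intro exI[of _ "1 / u"]) simp
qed

lemma iso_Q_quad_twist_rat_squarefree_part:
  assumes "c \<noteq> 0"
  shows "iso_Q (quad_twist c E) (quad_twist (of_int (rat_squarefree_part c)) E)"
proof -
  define e where "e = rat_squarefree_part c"
  obtain v where "v \<noteq> 0" and c: "c = v ^ 2 * of_int e"
    using rat_squarefree_part_decompose[OF assms] unfolding e_def .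
  have "quad_twist (of_int e) E = quad_twist ((1 / v) ^ 2) (quad_twist c E)"
    using \<open>v \<noteq> 0\<close> by (simp add: c power_divide flip: quad_twist_mult)
  with \<open>v \<noteq> 0\<close> show ?thesis
    unfolding iso_Q_iff_quad_twist_square e_def by (intro exI[of _ "1 / v"]) simp
qed

lemma ec_add_self_eq_imp_Inf: "ec_add E P P = P \<Longrightarrow> P = Inf"
  by (cases P) (auto simp: ec_add_def Let_def split: if_splits)

lemma ec_add_Pt_self_eq_Inf_iff: "ec_add E (Pt x y) (Pt x y) = Inf \<longleftrightarrow> y = 0"
  by (auto simp: ec_add_def Let_def)

lemma klein_hom_two_torsion:
  assumes inj: "inj \<phi>" and on_curve: "\<And>a. on_curve E (\<phi> a)"
    and hom: "\<And>a b. \<phi> (klein_add a b) = ec_add E (\<phi> a) (\<phi> b)"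
    and "a \<noteq> (False, False)"
  obtains x where "\<phi> a = Pt x 0" and "x ^ 3 + fst E * x + snd E = 0"
proof -
  have "\<phi> (False, False) = ec_add E (\<phi> (False, False)) (\<phi> (False, False))"
    using hom[of "(False, False)" "(False, False)"] by (simp add: klein_add_def)
  then have zero: "\<phi> (False, False) = Inf" by (metis ec_add_self_eq_imp_Inf)
  then have "\<phi> a \<noteq> Inf" using inj \<open>a \<noteq> (False, False)\<close> by (metis injD)
  then obtain x y where xy: "\<phi> a = Pt x y" by (cases "\<phi> a") auto
  have "ec_add E (\<phi> a) (\<phi> a) = Inf"
    using hom[of a a] zero by (simp add: klein_add_def)
  then have "y = 0" using xy ec_add_Pt_self_eq_Inf_iff by simp
  moreover have "y ^ 2 = x ^ 3 + fst E * x + snd E"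
    using on_curve[of a] xy by (simp add: on_curve_def)
  ultimately show ?thesis using that xy by simp
qed

lemma klein_embeds_tors_imp_three_roots:
  assumes "klein_embeds_tors (A, B)"
  obtains x1 x2 x3 where "distinct [x1, x2, x3]"
    and "x1 ^ 3 + A * x1 + B = 0" "x2 ^ 3 + A * x2 + B = 0" "x3 ^ 3 + A * x3 + B = 0"
proof -
  obtain \<phi> where inj: "inj \<phi>" and tors: "\<And>a. tors_pt (A, B) (\<phi> a)"
    and hom: "\<And>a b. \<phi> (klein_add a b) = ec_add (A, B) (\<phi> a) (\<phi> b)"
    using assms unfolding klein_embeds_tors_def by blast
  have on_curve: "on_curve (A, B) (\<phi> a)" for a using tors by (simp add: tors_pt_def)
  note two_torsion = klein_hom_two_torsion[OF inj on_curve hom]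
  obtain x1 where 1: "\<phi> (True, False) = Pt x1 0" "x1 ^ 3 + A * x1 + B = 0"
    using two_torsion[of "(True, False)"] by auto
  obtain x2 where 2: "\<phi> (False, True) = Pt x2 0" "x2 ^ 3 + A * x2 + B = 0"
    using two_torsion[of "(False, True)"] by auto
  obtain x3 where 3: "\<phi> (True, True) = Pt x3 0" "x3 ^ 3 + A * x3 + B = 0"
    using two_torsion[of "(True, True)"] by auto
  have "distinct [\<phi> (True, False), \<phi> (False, True), \<phi> (True, True)]"
    using inj by (simp add: inj_eq)
  then have "distinct [x1, x2, x3]" using 1 2 3 by auto
  with 1 2 3 show ?thesis using that by blast
qed

lemma depressed_cubic_three_roots:
  fixes x1 x2 x3 A B :: "'a :: idom"
  assumes "distinct [x1, x2, x3]"
    and r1: "x1 ^ 3 + A * x1 + B = 0" and r2: "x2 ^ 3 + A * x2 + B = 0"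
    and r3: "x3 ^ 3 + A * x3 + B = 0"
  shows "x3 = - x1 - x2" and "A = - (x1 ^ 2 + x1 * x2 + x2 ^ 2)" and "B = x1 * x2 * (x1 + x2)"
proof -
  have "(x1 - x2) * (x1 ^ 2 + x1 * x2 + x2 ^ 2 + A) = 0" using r1 r2 by algebra
  with assms(1) have "x1 ^ 2 + x1 * x2 + x2 ^ 2 + A = 0" by simp
  then show A: "A = - (x1 ^ 2 + x1 * x2 + x2 ^ 2)" by algebra
  have "(x1 - x3) * (x1 ^ 2 + x1 * x3 + x3 ^ 2 + A) = 0" using r1 r3 by algebra
  with assms(1) have "x1 ^ 2 + x1 * x3 + x3 ^ 2 + A = 0" by simp
  then have "(x3 - x2) * (x1 + x2 + x3) = 0" unfolding A by algebra
  with assms(1) have "x1 + x2 + x3 = 0" by auto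
  then show "x3 = - x1 - x2" by algebra
  show "B = x1 * x2 * (x1 + x2)" using r1 unfolding A by algebra
qed

lemma Etd_eq_quad_twist: "Etd t d = quad_twist (of_int d) (ff t, gg t)"
  by (simp add: Etd_def quad_twist_def)

lemma ec_disc_Etd:
  "ec_disc (fst (Etd t d)) (snd (Etd t d)) = 8503056 * of_int d ^ 6 * t ^ 2 * (t - 1) ^ 2"
  unfolding ec_disc_def Etd_def ff_def gg_def by simp algebra

lemma mem_G_idx_iff: "(t, d) \<in> G_idx \<longleftrightarrow> squarefree d \<and> t \<noteq> 0 \<and> t \<noteq> 1"
proof -
  have "squarefree d \<Longrightarrow> d \<noteq> 0" by auto
  then show ?thesis unfolding G_idx_def by (auto simp: ec_disc_Etd)
qed

lemma ff_gg_root_iff: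
  "x ^ 3 + ff t * x + gg t = 0 \<longleftrightarrow> x = 3 * (2 * t - 1) \<or> x = - 3 * (t + 1) \<or> x = 3 * (2 - t)"
proof -
  have "x ^ 3 + ff t * x + gg t = (x - 3 * (2 * t - 1)) * (x - (- 3 * (t + 1))) * (x - 3 * (2 - t))"
    unfolding ff_def gg_def by algebra
  then show ?thesis by (simp only: mult_eq_0_iff right_minus_eq disj_assoc)
qed

lemma ff_neq_0: "ff t \<noteq> 0"
proof -
  have "t ^ 2 - t + 1 = (t - 1 / 2) ^ 2 + 3 / 4" by (simp add: power2_eq_square algebra_simps)
  also have "\<dots> > 0" by (simp add: add_nonneg_pos)
  finally show ?thesis by (simp add: ff_def)
qed

lemma j_inv_eq_1728_iff:
  assumes "ec_disc A B \<noteq> 0"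
  shows "j_inv A B = 1728 \<longleftrightarrow> B = 0"
proof -
  have "4 * A ^ 3 + 27 * B ^ 2 \<noteq> 0" using assms by (simp add: ec_disc_def)
  then show ?thesis by (auto simp: j_inv_def divide_eq_eq)
qed

lemma three_roots_imp_iso_Etd:
  assumes "distinct [x1, x2, x3]"
    and "x1 ^ 3 + A * x1 + B = 0" "x2 ^ 3 + A * x2 + B = 0" "x3 ^ 3 + A * x3 + B = 0"
  shows "\<exists>p \<in> G_idx. iso_Q (A, B) (Etd (fst p) (snd p))"
proof -
  note vieta = depressed_cubic_three_roots[OF assms]
  define D where "D = x3 - x2"
  define t where "t = (x1 - x2) / D"
  have "D \<noteq> 0" using assms(1) by (simp add: D_def)
  have D: "D = - x1 - 2 * x2" by (simp add: D_def vieta(1))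
  have Dt: "D * t = x1 - x2" using \<open>D \<noteq> 0\<close> by (simp add: t_def)
  have "t \<noteq> 0" "t \<noteq> 1" using assms(1) \<open>D \<noteq> 0\<close> by (auto simp: t_def D_def field_simps)
  (* quad_twist c (ff t, gg t) has 2-torsion abscissae 3c(2t - 1), -3c(t + 1), 3c(2 - t),
     which are x1, x2, x3 for c = D/9 *)
  have "(A, B) = quad_twist (D / 9) (ff t, gg t)"
  proof -
    have "(D / 9) ^ 2 * ff t = - ((D * t) ^ 2 - D * (D * t) + D ^ 2) / 3"
      by (simp add: ff_def power2_eq_square field_simps)
    also have "\<dots> = A" unfolding Dt by (simp add: D vieta(2) field_simps power2_eq_square)
    finally have "(D / 9) ^ 2 * ff t = A" .
    moreover have "(D / 9) ^ 3 * gg t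
        = - (2 * (D * t) ^ 3 - 3 * (D * t) ^ 2 * D - 3 * (D * t) * D ^ 2 + 2 * D ^ 3) / 27"
      by (simp add: gg_def power3_eq_cube power2_eq_square field_simps)
    moreover have "\<dots> = B" unfolding Dt by (simp add: D vieta(3) field_simps power3_eq_cube power2_eq_square)
    ultimately show ?thesis by (simp add: quad_twist_def)
  qed
  then have "iso_Q (A, B) (Etd t (rat_squarefree_part (D / 9)))"
    using iso_Q_quad_twist_rat_squarefree_part \<open>D \<noteq> 0\<close> by (simp add: Etd_eq_quad_twist)
  moreover have "(t, rat_squarefree_part (D / 9)) \<in> G_idx"
    using \<open>t \<noteq> 0\<close> \<open>t \<noteq> 1\<close> by (simp add: mem_G_idx_iff)
  ultimately show ?thesis by force
qed

(* s runs through the orbit of t under the permutations of the three 2-torsion points,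
   paired with the twist factor w relating the two curves *)
definition anharmonic_orbit :: "rat \<Rightarrow> (rat \<times> rat) list" where
  "anharmonic_orbit t =
     [(1, t), (-1, 1 - t), (1 - t, t / (t - 1)), (t - 1, 1 / (1 - t)), (-t, (t - 1) / t), (t, 1 / t)]"

lemma anharmonic_orbit_quad_twist:
  assumes "t \<noteq> 0" "t \<noteq> 1" and "(w, s) \<in> set (anharmonic_orbit t)"
  shows "w \<noteq> 0" "s \<noteq> 0" "s \<noteq> 1" "(ff t, gg t) = quad_twist w (ff s, gg s)"
proof -
  have "t - 1 \<noteq> 0" "1 - t \<noteq> 0" using assms by auto
  with assms show "w \<noteq> 0" "s \<noteq> 0" "s \<noteq> 1" "(ff t, gg t) = quad_twist w (ff s, gg s)"
    by (auto simp: anharmonic_orbit_def quad_twist_def ff_def gg_def field_simps; algebra)+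
qed

lemma quad_twist_imp_anharmonic_orbit:
  assumes "t \<noteq> 0" "t \<noteq> 1" "w \<noteq> 0" "s \<noteq> 0" and twist: "(ff t, gg t) = quad_twist w (ff s, gg s)"
  shows "(w, s) \<in> set (anharmonic_orbit t)"
proof -
  (* w scales the 2-torsion abscissae 3(2s - 1), -3(s + 1) of (ff s, gg s) to 2-torsion
     abscissae of (ff t, gg t); two distinct such images determine (w, s) *)
  have scaled_root: "w * r = 3 * (2 * t - 1) \<or> w * r = - 3 * (t + 1) \<or> w * r = 3 * (2 - t)"
    if "r = 3 * (2 * s - 1) \<or> r = - 3 * (s + 1)" for r
  proof -
    have "r ^ 3 + ff s * r + gg s = 0" using that by (auto simp: ff_gg_root_iff)
    then have "(w * r) ^ 3 + ff t * (w * r) + gg t = 0"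
      using quad_twist_root[of r "(ff s, gg s)" w] twist by (metis fst_conv snd_conv)
    then show ?thesis by (simp only: ff_gg_root_iff)
  qed
  define a where "a = w * (2 * s - 1)"
  define b where "b = - w * (s + 1)"
  have a: "a = 2 * t - 1 \<or> a = - (t + 1) \<or> a = 2 - t"
    using scaled_root[of "3 * (2 * s - 1)"] by (auto simp: a_def algebra_simps)
  have b: "b = 2 * t - 1 \<or> b = - (t + 1) \<or> b = 2 - t"
    using scaled_root[of "- 3 * (s + 1)"] by (auto simp: b_def algebra_simps)
  have "a \<noteq> b" using assms by (simp add: a_def b_def algebra_simps)
  have w: "w = - (a + 2 * b) / 3" by (simp add: a_def b_def algebra_simps)
  have s: "s = (a - b) / (- (a + 2 * b))" using \<open>w \<noteq> 0\<close> by (simp add: a_def b_def field_simps)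
  from a b \<open>a \<noteq> b\<close> show ?thesis
    unfolding w s using \<open>t \<noteq> 0\<close> \<open>t \<noteq> 1\<close>
    by (elim disjE; hypsubst; simp add: anharmonic_orbit_def field_simps)
qed

lemma distinct_anharmonic_orbit:
  assumes "t \<noteq> 0" "t \<noteq> 1" "gg t \<noteq> 0"
  shows "distinct (map snd (anharmonic_orbit t))"
proof -
  have "gg t = -27 * ((2 * t - 1) * (t + 1) * (t - 2))" unfolding gg_def by algebra
  with assms(3) have "2 * t - 1 \<noteq> 0" "t + 1 \<noteq> 0" "t - 2 \<noteq> 0" by auto
  moreover have "t * t - t + 1 \<noteq> 0" using ff_neq_0[of t] by (simp add: ff_def power2_eq_square)
  moreover have "t - 1 \<noteq> 0" "1 - t \<noteq> 0" using assms by auto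
  ultimately show ?thesis
    using assms by (simp add: anharmonic_orbit_def field_simps square_eq_1_iff eq_neg_iff_add_eq_0)
qed

lemma iso_Q_Etd_imp_anharmonic_orbit:
  assumes "(t, d) \<in> G_idx" "(s, e) \<in> G_idx" and iso: "iso_Q (Etd s e) (Etd t d)"
  obtains w where "(w, s) \<in> set (anharmonic_orbit t)" "e = rat_squarefree_part (w * of_int d)"
proof -
  have "t \<noteq> 0" "t \<noteq> 1" "s \<noteq> 0" "squarefree d" "squarefree e"
    using assms by (auto simp: mem_G_idx_iff)
  then have "(of_int d :: rat) \<noteq> 0" "(of_int e :: rat) \<noteq> 0" by auto
  obtain u where "u \<noteq> 0" and "Etd t d = quad_twist (u ^ 2) (Etd s e)"
    using iso by (auto simp: iso_Q_iff_quad_twist_square)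
  then have "quad_twist (of_int d) (ff t, gg t) = quad_twist (u ^ 2 * of_int e) (ff s, gg s)"
    by (simp add: Etd_eq_quad_twist quad_twist_mult)
  then have twist: "(ff t, gg t) = quad_twist (u ^ 2 * of_int e / of_int d) (ff s, gg s)"
    by (rule quad_twist_cancel[OF \<open>of_int d \<noteq> 0\<close>])
  define w where "w = u ^ 2 * of_int e / of_int d"
  have "w \<noteq> 0" using \<open>u \<noteq> 0\<close> \<open>of_int e \<noteq> 0\<close> \<open>of_int d \<noteq> 0\<close> by (simp add: w_def)
  then have "(w, s) \<in> set (anharmonic_orbit t)"
    using quad_twist_imp_anharmonic_orbit \<open>t \<noteq> 0\<close> \<open>t \<noteq> 1\<close> \<open>s \<noteq> 0\<close> twist
    by (simp add: w_def)
  moreover have "rat_squarefree_part (w * of_int d) = e"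
    using \<open>squarefree e\<close> \<open>u \<noteq> 0\<close> \<open>of_int d \<noteq> 0\<close>
    by (intro rat_squarefree_part_eqI[where v = u]) (simp_all add: w_def)
  ultimately show ?thesis using that by simp
qed

lemma anharmonic_orbit_imp_iso_Q_Etd:
  assumes "(t, d) \<in> G_idx" and orbit: "(w, s) \<in> set (anharmonic_orbit t)"
  defines "e \<equiv> rat_squarefree_part (w * of_int d)"
  shows "(s, e) \<in> G_idx" and "iso_Q (Etd s e) (Etd t d)"
proof -
  have "t \<noteq> 0" "t \<noteq> 1" "squarefree d" using assms(1) by (auto simp: mem_G_idx_iff)
  note twist = anharmonic_orbit_quad_twist[OF \<open>t \<noteq> 0\<close> \<open>t \<noteq> 1\<close> orbit]
  show "(s, e) \<in> G_idx" using twist by (simp add: mem_G_idx_iff e_def)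
  have "w * of_int d \<noteq> 0" using \<open>w \<noteq> 0\<close> \<open>squarefree d\<close> by auto
  then have "iso_Q (quad_twist (w * of_int d) (ff s, gg s)) (Etd s e)"
    unfolding e_def Etd_eq_quad_twist by (rule iso_Q_quad_twist_rat_squarefree_part)
  moreover have "quad_twist (w * of_int d) (ff s, gg s) = Etd t d"
    by (simp add: Etd_eq_quad_twist twist(4) mult.commute flip: quad_twist_mult)
  ultimately show "iso_Q (Etd s e) (Etd t d)" by (simp add: iso_Q_sym)
qed

lemma iso_class_Etd:
  assumes "(t, d) \<in> G_idx"
  shows "{q \<in> G_idx. iso_Q (Etd (fst q) (snd q)) (Etd t d)}
    = (\<lambda>(w, s). (s, rat_squarefree_part (w * of_int d))) ` set (anharmonic_orbit t)"
    (is "?class = ?orbit")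
proof
  show "?class \<subseteq> ?orbit"
    by (force elim: iso_Q_Etd_imp_anharmonic_orbit[OF assms])
  show "?orbit \<subseteq> ?class"
    using anharmonic_orbit_imp_iso_Q_Etd[OF assms] by auto
qed

lemma card_iso_class_Etd:
  assumes "(t, d) \<in> G_idx" and "gg t \<noteq> 0"
  shows "card {q \<in> G_idx. iso_Q (Etd (fst q) (snd q)) (Etd t d)} = 6"
proof -
  have "t \<noteq> 0" "t \<noteq> 1" using assms(1) by (auto simp: mem_G_idx_iff)
  then have "distinct (map snd (anharmonic_orbit t))"
    using assms(2) by (rule distinct_anharmonic_orbit)
  then show ?thesis by (simp add: iso_class_Etd[OF assms(1)] anharmonic_orbit_def)
qed

theorem lemma6p3:
  shows "(\<forall>A B :: rat. ec_disc A B \<noteq> 0 \<and> klein_embeds_tors (A, B)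
            \<and> j_inv A B \<noteq> 0 \<and> j_inv A B \<noteq> 1728
          \<longrightarrow> (\<exists>p \<in> G_idx. iso_Q (A, B) (Etd (fst p) (snd p))))
       \<and> (\<forall>p \<in> G_idx. j_inv (fst (Etd (fst p) (snd p))) (snd (Etd (fst p) (snd p))) \<noteq> 0
            \<and> j_inv (fst (Etd (fst p) (snd p))) (snd (Etd (fst p) (snd p))) \<noteq> 1728
          \<longrightarrow> card {q \<in> G_idx. iso_Q (Etd (fst q) (snd q)) (Etd (fst p) (snd p))} = 6)"
proof (intro conjI allI impI ballI)
  fix A B :: rat
  assume "ec_disc A B \<noteq> 0 \<and> klein_embeds_tors (A, B) \<and> j_inv A B \<noteq> 0 \<and> j_inv A B \<noteq> 1728"
  then obtain x1 x2 x3 where "distinct [x1, x2, x3]"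
    and "x1 ^ 3 + A * x1 + B = 0" "x2 ^ 3 + A * x2 + B = 0" "x3 ^ 3 + A * x3 + B = 0"
    using klein_embeds_tors_imp_three_roots by blast
  then show "\<exists>p \<in> G_idx. iso_Q (A, B) (Etd (fst p) (snd p))"
    by (rule three_roots_imp_iso_Etd)
next
  fix p
  assume p: "p \<in> G_idx"
    and j: "j_inv (fst (Etd (fst p) (snd p))) (snd (Etd (fst p) (snd p))) \<noteq> 0
            \<and> j_inv (fst (Etd (fst p) (snd p))) (snd (Etd (fst p) (snd p))) \<noteq> 1728"
  obtain t d where p_eq: "p = (t, d)" by fastforce
  have "ec_disc (fst (Etd t d)) (snd (Etd t d)) \<noteq> 0" using p by (simp add: G_idx_def p_eq)
  with j have "snd (Etd t d) \<noteq> 0" by (simp add: j_inv_eq_1728_iff p_eq)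
  then have "gg t \<noteq> 0" by (simp add: Etd_def)
  then show "card {q \<in> G_idx. iso_Q (Etd (fst q) (snd q)) (Etd (fst p) (snd p))} = 6"
    using card_iso_class_Etd p by (simp add: p_eq)
qed

end
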